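(* Let $\epsilon>0$ and let $\mathcal V=\{s_L(1+\epsilon)^\ell:0\le\ell\le k\}$. For every instance of problem MR there is a feasible schedule in which every task runs at a speed belonging to $\mathcal V$ and whose objective value $\sum_j w_jC_j$ is at most $(1+\epsilon)$ times the optimal objective value of the instance.
   Context: Problem MR. There are jobs $\mathcal J=\{1,\dots,n\}$ and processors $\mathcal P=\{1,\dots,m\}$. Job $j$ has weight $w_j>0$, release date $r_j\ge0$, and a nonempty set of Map tasks and a nonempty set of Reduce tasks, preassigned to processors with at most one task of each job per processor; $T_{i,j}$ is the task of job $j$ on processor $i$, with work $v_{i,j}\ge0$; $\mathcal T$ is the set of all tasks. A schedule gives each task a start time and a constant speed $s_{i,j}>0$; the task runs non-preemptively for $v_{i,j}/s_{i,j}$ time units and uses energy $v_{i,j}s_{i,j}^{\beta-1}$, where $\beta>1$ is a fixed constant. Feasibility: each processor runs at most one task at a time; tasks of job $j$ start no earlier than $r_j$; Reduce tasks of job $j$ start only after all Map tasks of job $j$ complete; total energy at most a given budget $E>0$. $C_j$ is the maximum completion time of the tasks of job $j$; the objective is to minimize $\sum_j w_jC_j$. Notation: $w_{\min},w_{\max}$ are the min/max weights, $r_{\max}=\max_j r_j$, $v_{\max}=\max v_{i,j}$, $v_{\min}=\min\{v_{i,j}:v_{i,j}>0\}$, $t_{\max}=\frac{w_{\max}}{w_{\min}}\big(nr_{\max}+n(n+1)(|\mathcal T|v_{\max}^\beta/E)^{1/(\beta-1)}\big)$, $s_L=v_{\min}/t_{\max}$, $s_U=(E/v_{\min})^{1/(\beta-1)}$,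 and $k=\lceil\log_{1+\epsilon}(s_U/s_L)\rceil$. *)

theory Defs
  imports Complex_Main
begin

text \<open>Jobs are 0..<n, processors 0..<m. Job j has Map tasks on the
processors in Mp j and Reduce tasks on the processors in Rd j (disjoint, so at
most one task of each job per processor). Task (i,j) has work v i j.\<close>

definition tasks :: "nat \<Rightarrow> (nat \<Rightarrow> nat set) \<Rightarrow> (nat \<Rightarrow> nat set) \<Rightarrow> (nat \<times> nat) set" where
  "tasks n Mp Rd = {(i, j). j < n \<and> i \<in> Mp j \<union> Rd j}"

definition mr_instance ::
  "nat \<Rightarrow> nat \<Rightarrow> (nat \<Rightarrow> nat set) \<Rightarrow> (nat \<Rightarrow> nat set) \<Rightarrow> (nat \<Rightarrow> real) \<Rightarrow> (nat \<Rightarrow> real)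
    \<Rightarrow> (nat \<Rightarrow> nat \<Rightarrow> real) \<Rightarrow> real \<Rightarrow> real \<Rightarrow> bool" where
  "mr_instance n m Mp Rd w r v \<beta> E \<longleftrightarrow>
     \<beta> > 1 \<and> E > 0 \<and>
     (\<forall>j<n. w j > 0 \<and> r j \<ge> 0 \<and> Mp j \<noteq> {} \<and> Rd j \<noteq> {} \<and>
            Mp j \<subseteq> {..<m} \<and> Rd j \<subseteq> {..<m} \<and> Mp j \<inter> Rd j = {}) \<and>
     (\<forall>(i, j) \<in> tasks n Mp Rd. v i j \<ge> 0)"

definition task_completion ::
  "(nat \<Rightarrow> nat \<Rightarrow> real) \<Rightarrow> (nat \<Rightarrow> nat \<Rightarrow> real) \<Rightarrow> (nat \<Rightarrow> nat \<Rightarrow> real) \<Rightarrow> nat \<Rightarrow> nat \<Rightarrow> real" where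
  "task_completion v S sp i j = S i j + v i j / sp i j"

definition feasible ::
  "nat \<Rightarrow> (nat \<Rightarrow> nat set) \<Rightarrow> (nat \<Rightarrow> nat set) \<Rightarrow> (nat \<Rightarrow> real)
    \<Rightarrow> (nat \<Rightarrow> nat \<Rightarrow> real) \<Rightarrow> real \<Rightarrow> real
    \<Rightarrow> (nat \<Rightarrow> nat \<Rightarrow> real) \<Rightarrow> (nat \<Rightarrow> nat \<Rightarrow> real) \<Rightarrow> bool" where
  "feasible n Mp Rd r v \<beta> E S sp \<longleftrightarrow>
     (\<forall>(i, j) \<in> tasks n Mp Rd. sp i j > 0 \<and> S i j \<ge> r j) \<and>
     (\<forall>(i, j) \<in> tasks n Mp Rd. \<forall>(i', j') \<in> tasks n Mp Rd. i = i' \<and> j \<noteq> j' \<longrightarrow>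
        task_completion v S sp i j \<le> S i j' \<or> task_completion v S sp i j' \<le> S i j) \<and>
     (\<forall>j<n. \<forall>i \<in> Rd j. \<forall>i' \<in> Mp j. S i j \<ge> task_completion v S sp i' j) \<and>
     (\<Sum>(i, j) \<in> tasks n Mp Rd. v i j * sp i j powr (\<beta> - 1)) \<le> E"

definition job_completion ::
  "(nat \<Rightarrow> nat set) \<Rightarrow> (nat \<Rightarrow> nat set) \<Rightarrow> (nat \<Rightarrow> nat \<Rightarrow> real)
    \<Rightarrow> (nat \<Rightarrow> nat \<Rightarrow> real) \<Rightarrow> (nat \<Rightarrow> nat \<Rightarrow> real) \<Rightarrow> nat \<Rightarrow> real" where
  "job_completion Mp Rd v S sp j = Max ((\<lambda>i. task_completion v S sp i j) ` (Mp j \<union> Rd j))"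

definition objective ::
  "nat \<Rightarrow> (nat \<Rightarrow> nat set) \<Rightarrow> (nat \<Rightarrow> nat set) \<Rightarrow> (nat \<Rightarrow> real) \<Rightarrow> (nat \<Rightarrow> nat \<Rightarrow> real)
    \<Rightarrow> (nat \<Rightarrow> nat \<Rightarrow> real) \<Rightarrow> (nat \<Rightarrow> nat \<Rightarrow> real) \<Rightarrow> real" where
  "objective n Mp Rd w v S sp = (\<Sum>j<n. w j * job_completion Mp Rd v S sp j)"

definition opt_value ::
  "nat \<Rightarrow> (nat \<Rightarrow> nat set) \<Rightarrow> (nat \<Rightarrow> nat set) \<Rightarrow> (nat \<Rightarrow> real) \<Rightarrow> (nat \<Rightarrow> real)
    \<Rightarrow> (nat \<Rightarrow> nat \<Rightarrow> real) \<Rightarrow> real \<Rightarrow> real \<Rightarrow> real" where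
  "opt_value n Mp Rd w r v \<beta> E =
     Inf {objective n Mp Rd w v S sp | S sp. feasible n Mp Rd r v \<beta> E S sp}"

definition t_max ::
  "nat \<Rightarrow> (nat \<Rightarrow> nat set) \<Rightarrow> (nat \<Rightarrow> nat set) \<Rightarrow> (nat \<Rightarrow> real) \<Rightarrow> (nat \<Rightarrow> real)
    \<Rightarrow> (nat \<Rightarrow> nat \<Rightarrow> real) \<Rightarrow> real \<Rightarrow> real \<Rightarrow> real" where
  "t_max n Mp Rd w r v \<beta> E =
    (let wmin = Min (w ` {..<n}); wmax = Max (w ` {..<n}); rmax = Max (r ` {..<n});
         vmax = Max ((\<lambda>(i, j). v i j) ` tasks n Mp Rd);
         T = real (card (tasks n Mp Rd))
     in wmax / wmin * (real n * rmax
          + real n * (real n + 1) * (T * vmax powr \<beta> / E) powr (1 / (\<beta> - 1))))"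

definition v_min :: "nat \<Rightarrow> (nat \<Rightarrow> nat set) \<Rightarrow> (nat \<Rightarrow> nat set) \<Rightarrow> (nat \<Rightarrow> nat \<Rightarrow> real) \<Rightarrow> real" where
  "v_min n Mp Rd v = Min {v i j | i j. (i, j) \<in> tasks n Mp Rd \<and> v i j > 0}"

definition s_L ::
  "nat \<Rightarrow> (nat \<Rightarrow> nat set) \<Rightarrow> (nat \<Rightarrow> nat set) \<Rightarrow> (nat \<Rightarrow> real) \<Rightarrow> (nat \<Rightarrow> real)
    \<Rightarrow> (nat \<Rightarrow> nat \<Rightarrow> real) \<Rightarrow> real \<Rightarrow> real \<Rightarrow> real" where
  "s_L n Mp Rd w r v \<beta> E = v_min n Mp Rd v / t_max n Mp Rd w r v \<beta> E"

definition s_U :: "nat \<Rightarrow> (nat \<Rightarrow> nat set) \<Rightarrow> (nat \<Rightarrow> nat set) \<Rightarrow> (nat \<Rightarrow> nat \<Rightarrow> real) \<Rightarrow> real \<Rightarrow> real \<Rightarrow> real" where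
  "s_U n Mp Rd v \<beta> E = (E / v_min n Mp Rd v) powr (1 / (\<beta> - 1))"

definition k_param ::
  "real \<Rightarrow> nat \<Rightarrow> (nat \<Rightarrow> nat set) \<Rightarrow> (nat \<Rightarrow> nat set) \<Rightarrow> (nat \<Rightarrow> real) \<Rightarrow> (nat \<Rightarrow> real)
    \<Rightarrow> (nat \<Rightarrow> nat \<Rightarrow> real) \<Rightarrow> real \<Rightarrow> real \<Rightarrow> int" where
  "k_param \<epsilon> n Mp Rd w r v \<beta> E =
     \<lceil>log (1 + \<epsilon>) (s_U n Mp Rd v \<beta> E / s_L n Mp Rd w r v \<beta> E)\<rceil>"

definition speed_set ::
  "real \<Rightarrow> nat \<Rightarrow> (nat \<Rightarrow> nat set) \<Rightarrow> (nat \<Rightarrow> nat set) \<Rightarrow> (nat \<Rightarrow> real) \<Rightarrow> (nat \<Rightarrow> real)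
    \<Rightarrow> (nat \<Rightarrow> nat \<Rightarrow> real) \<Rightarrow> real \<Rightarrow> real \<Rightarrow> real set" where
  "speed_set \<epsilon> n Mp Rd w r v \<beta> E =
     {s_L n Mp Rd w r v \<beta> E * (1 + \<epsilon>) ^ l | l :: nat. int l \<le> k_param \<epsilon> n Mp Rd w r v \<beta> E}"

end

theory Submission
  imports Defs
begin

text \<open>
  An optimal schedule exists: near-optimal schedules have their start times and the speeds of their
  tasks with positive work in a compact box, and a convergent subsequence has a feasible limit.
  In an optimal schedule a task with positive work runs at speed at most s_U, by the energy budget,
  and at least s_L, since otherwise this task alone would complete later than the objective of an
  explicit reference schedule allows. Rounding such a speed down into the grid V saves energy and
  lengthens the task by a factor at most 1 + \<epsilon>; stretching all start times by the same factor
  then keeps the schedule feasible and multiplies every completion time by at most 1 + \<epsilon>.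
\<close>

lemma bounded_family_convergent_subseq:
  fixes f :: "nat \<Rightarrow> 'a \<Rightarrow> real"
  assumes "finite A" and "\<And>k x. x \<in> A \<Longrightarrow> \<bar>f k x\<bar> \<le> B"
  shows "\<exists>\<sigma>. strict_mono \<sigma> \<and> (\<forall>x\<in>A. convergent (\<lambda>k. f (\<sigma> k) x))"
  using assms
proof (induction A rule: finite_induct)
  case empty
  show ?case by (intro exI[of _ id]) (auto simp: strict_mono_def)
next
  case (insert a A)
  then obtain \<sigma> where \<sigma>: "strict_mono \<sigma>" "\<forall>x\<in>A. convergent (\<lambda>k. f (\<sigma> k) x)"
    by auto
  obtain \<tau> where \<tau>: "strict_mono \<tau>" "monoseq (\<lambda>k. f (\<sigma> (\<tau> k)) a)"
    using seq_monosub[of "\<lambda>k. f (\<sigma> k) a"] by auto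
  have "Bseq (\<lambda>k. f (\<sigma> (\<tau> k)) a)"
    using insert.prems by (intro BseqI'[of _ B]) auto
  with \<tau>(2) have "convergent (\<lambda>k. f (\<sigma> (\<tau> k)) a)"
    using Bseq_monoseq_convergent by blast
  moreover have "convergent (\<lambda>k. f (\<sigma> (\<tau> k)) x)" if "x \<in> A" for x
  proof -
    obtain L where "(\<lambda>k. f (\<sigma> k) x) \<longlonglongrightarrow> L"
      using \<sigma>(2) \<open>x \<in> A\<close> by (auto simp: convergent_def)
    from LIMSEQ_subseq_LIMSEQ[OF this \<tau>(1)] show ?thesis
      by (auto simp: convergent_def o_def)
  qed
  moreover have "strict_mono (\<lambda>k. \<sigma> (\<tau> k))"
    using strict_mono_o[OF \<sigma>(1) \<tau>(1)] by (simp add: o_def)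
  ultimately show ?case by (intro exI[of _ "\<lambda>k. \<sigma> (\<tau> k)"]) auto
qed

lemma tendsto_Max_image:
  fixes f :: "nat \<Rightarrow> 'a \<Rightarrow> real"
  assumes "finite A" "A \<noteq> {}" "\<And>x. x \<in> A \<Longrightarrow> (\<lambda>k. f k x) \<longlonglongrightarrow> l x"
  shows "(\<lambda>k. Max (f k ` A)) \<longlonglongrightarrow> Max (l ` A)"
  using assms
proof (induction A rule: finite_ne_induct)
  case (insert x A)
  then have "(\<lambda>k. max (f k x) (Max (f k ` A))) \<longlonglongrightarrow> max (l x) (Max (l ` A))"
    by (intro tendsto_max) auto
  with insert show ?case by simp
qed simp

lemma LIMSEQ_le_disj:
  fixes a b c d :: "nat \<Rightarrow> real"
  assumes "\<And>k. a k \<le> b k \<or> c k \<le> d k"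
    and "a \<longlonglongrightarrow> A" "b \<longlonglongrightarrow> B" "c \<longlonglongrightarrow> C" "d \<longlonglongrightarrow> D"
  shows "A \<le> B \<or> C \<le> D"
proof -
  have "(\<lambda>k. min (a k - b k) (c k - d k)) \<longlonglongrightarrow> min (A - B) (C - D)"
    using assms by (intro tendsto_min tendsto_diff) auto
  moreover have "min (a k - b k) (c k - d k) \<le> 0" for k
    using assms(1)[of k] by (auto simp: min_def)
  ultimately have "min (A - B) (C - D) \<le> 0"
    by (intro LIMSEQ_le_const2) auto
  then show ?thesis by (auto simp: min_def split: if_splits)
qed

lemma geometric_grid_round_down:
  fixes a b s \<epsilon> :: real
  assumes "0 < a" "a \<le> s" "s \<le> b" "\<epsilon> > 0"
  obtains l :: nat where "int l \<le> \<lceil>log (1 + \<epsilon>) (b / a)\<rceil>"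
    and "a * (1 + \<epsilon>) ^ l \<le> s" and "s \<le> (1 + \<epsilon>) * (a * (1 + \<epsilon>) ^ l)"
proof -
  define q where "q = 1 + \<epsilon>"
  define x where "x = log q (s / a)"
  have q: "q > 1" and ratio: "s / a \<ge> 1"
    using assms by (simp_all add: q_def)
  then have x: "x \<ge> 0" "q powr x = s / a"
    by (simp_all add: x_def)
  define l where "l = nat \<lfloor>x\<rfloor>"
  have l: "real l \<le> x" "x < real l + 1"
    using x by (simp_all add: l_def)
  have "q ^ l = q powr real l"
    using q by (simp add: powr_realpow)
  also have "\<dots> \<le> s / a"
    using q l x by (simp flip: x(2))
  finally have lower: "a * q ^ l \<le> s"
    using assms by (simp add: field_simps)
  have "s / a \<le> q powr (real l + 1)"
    using q l by (simp flip: x(2))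
  also have "\<dots> = q * q ^ l"
    using q powr_realpow[of q "Suc l"] by (simp add: add.commute)
  finally have upper: "s \<le> q * (a * q ^ l)"
    using assms by (simp add: field_simps)
  have "x \<le> log q (b / a)"
    unfolding x_def using q ratio assms by (subst log_le_cancel_iff) (auto intro: divide_right_mono)
  then have "int l \<le> \<lceil>log q (b / a)\<rceil>"
    using x l by (simp add: l_def) linarith
  with lower upper show ?thesis
    using that unfolding q_def by blast
qed

lemma sum_lessThan_affine:
  "(\<Sum>j<N. a + (2 * real j + 2) * b) = real N * a + real N * (real N + 1) * b"
  by (induction N) (auto simp: algebra_simps)

locale mr_problem =
  fixes n m :: nat and Mp Rd :: "nat \<Rightarrow> nat set" and w r :: "nat \<Rightarrow> real"
    and v :: "nat \<Rightarrow> nat \<Rightarrow> real" and \<beta> E :: real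
  assumes inst: "mr_instance n m Mp Rd w r v \<beta> E"
    and positive_work: "\<exists>(i, j) \<in> tasks n Mp Rd. v i j > 0"
begin

abbreviation "\<T> \<equiv> tasks n Mp Rd"
abbreviation "feas \<equiv> feasible n Mp Rd r v \<beta> E"
abbreviation "obj \<equiv> objective n Mp Rd w v"
abbreviation "OPT \<equiv> opt_value n Mp Rd w r v \<beta> E"

lemma beta_gt_1: "\<beta> > 1" and E_pos: "E > 0"
  using inst by (auto simp: mr_instance_def)

lemma job_data:
  assumes "j < n"
  shows w_pos: "w j > 0" and r_nonneg: "r j \<ge> 0" and Mp_nonempty: "Mp j \<noteq> {}"
    and finite_job_procs: "finite (Mp j \<union> Rd j)" and Mp_Rd_disjoint: "Mp j \<inter> Rd j = {}"
  using inst assms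
  by (auto simp: mr_instance_def dest: finite_subset[OF _ finite_lessThan])

lemma mem_tasks: "(i, j) \<in> \<T> \<longleftrightarrow> j < n \<and> i \<in> Mp j \<union> Rd j"
  by (simp add: tasks_def)

lemma v_nonneg: "(i, j) \<in> \<T> \<Longrightarrow> v i j \<ge> 0"
  using inst by (auto simp: mr_instance_def)

lemma finite_tasks: "finite \<T>"
proof (rule finite_subset)
  show "\<T> \<subseteq> {..<m} \<times> {..<n}"
    using inst by (auto simp: mr_instance_def tasks_def)
qed simp

lemma n_pos: "n > 0"
  using positive_work by (auto simp: tasks_def)

lemma v_min_pos: "v_min n Mp Rd v > 0"
  and v_min_le: "(i, j) \<in> \<T> \<Longrightarrow> v i j > 0 \<Longrightarrow> v_min n Mp Rd v \<le> v i j"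
proof -
  let ?V = "{v i j | i j. (i, j) \<in> \<T> \<and> v i j > 0}"
  have "?V \<subseteq> (\<lambda>(i, j). v i j) ` \<T>"
    by auto
  then have "finite ?V"
    using finite_tasks finite_subset by blast
  moreover have "?V \<noteq> {}"
    using positive_work by auto
  ultimately show "v_min n Mp Rd v > 0"
    and "(i, j) \<in> \<T> \<Longrightarrow> v i j > 0 \<Longrightarrow> v_min n Mp Rd v \<le> v i j"
    by (auto simp: v_min_def intro: Min_le)
qed

lemma feasibleI:
  assumes "\<And>i j. (i, j) \<in> \<T> \<Longrightarrow> sp i j > 0"
    and "\<And>i j. (i, j) \<in> \<T> \<Longrightarrow> r j \<le> S i j"
    and "\<And>i j j'. (i, j) \<in> \<T> \<Longrightarrow> (i, j') \<in> \<T> \<Longrightarrow> j \<noteq> j' \<Longrightarrow>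
      task_completion v S sp i j \<le> S i j' \<or> task_completion v S sp i j' \<le> S i j"
    and "\<And>j i i'. j < n \<Longrightarrow> i \<in> Rd j \<Longrightarrow> i' \<in> Mp j \<Longrightarrow> task_completion v S sp i' j \<le> S i j"
    and "(\<Sum>(i, j) \<in> \<T>. v i j * sp i j powr (\<beta> - 1)) \<le> E"
  shows "feas S sp"
  using assms unfolding feasible_def by blast

lemma feasible_disjointD:
  "feas S sp \<Longrightarrow> (i, j) \<in> \<T> \<Longrightarrow> (i, j') \<in> \<T> \<Longrightarrow> j \<noteq> j' \<Longrightarrow>
    task_completion v S sp i j \<le> S i j' \<or> task_completion v S sp i j' \<le> S i j"
  unfolding feasible_def by blast

lemma feasible_precedenceD:
  "feas S sp \<Longrightarrow> j < n \<Longrightarrow> i \<in> Rd j \<Longrightarrow> i' \<in> Mp j \<Longrightarrow> task_completion v S sp i' j \<le> S i j"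
  unfolding feasible_def by blast

lemma feasible_energyD: "feas S sp \<Longrightarrow> (\<Sum>(i, j) \<in> \<T>. v i j * sp i j powr (\<beta> - 1)) \<le> E"
  unfolding feasible_def by blast

lemma feasible_taskD:
  assumes "feas S sp" "(i, j) \<in> \<T>"
  shows speed_pos: "sp i j > 0" and start_ge_release: "S i j \<ge> r j"
    and start_nonneg: "S i j \<ge> 0" and start_le_completion: "S i j \<le> task_completion v S sp i j"
proof -
  show "sp i j > 0" "S i j \<ge> r j"
    using assms by (auto simp: feasible_def)
  then show "S i j \<ge> 0" "S i j \<le> task_completion v S sp i j"
    using assms(2) r_nonneg[of j] v_nonneg[OF assms(2)]
    by (auto simp: mem_tasks task_completion_def)
qed

lemma speed_le_s_U:
  assumes "feas S sp" "(i, j) \<in> \<T>" "v i j > 0"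
  shows "sp i j \<le> s_U n Mp Rd v \<beta> E"
proof -
  have sp: "sp i j > 0"
    using assms(1,2) by (rule speed_pos)
  have "v_min n Mp Rd v * sp i j powr (\<beta> - 1) \<le> v i j * sp i j powr (\<beta> - 1)"
    using v_min_le[OF assms(2,3)] by (intro mult_right_mono) auto
  also have "\<dots> \<le> (\<Sum>(i, j) \<in> \<T>. v i j * sp i j powr (\<beta> - 1))"
    using member_le_sum[of "(i, j)" \<T> "\<lambda>(i, j). v i j * sp i j powr (\<beta> - 1)"]
      assms(2) v_nonneg finite_tasks by fastforce
  also have "\<dots> \<le> E"
    using assms(1) by (rule feasible_energyD)
  finally have "sp i j powr (\<beta> - 1) \<le> E / v_min n Mp Rd v"
    using v_min_pos by (simp add: field_simps)
  then have "(sp i j powr (\<beta> - 1)) powr (1 / (\<beta> - 1)) \<le> (E / v_min n Mp Rd v) powr (1 / (\<beta> - 1))"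
    using beta_gt_1 by (intro powr_mono2) auto
  then show ?thesis
    using beta_gt_1 sp by (simp add: powr_powr s_U_def)
qed

lemma task_completion_le_job_completion:
  "j < n \<Longrightarrow> i \<in> Mp j \<union> Rd j \<Longrightarrow> task_completion v S sp i j \<le> job_completion Mp Rd v S sp j"
  unfolding job_completion_def using finite_job_procs by (intro Max_ge) auto

lemma job_completion_nonneg:
  assumes "feas S sp" "j < n"
  shows "job_completion Mp Rd v S sp j \<ge> 0"
proof -
  obtain i where "i \<in> Mp j"
    using Mp_nonempty[OF assms(2)] by auto
  then have "0 \<le> task_completion v S sp i j"
    using assms start_nonneg[OF assms(1)] start_le_completion[OF assms(1)]
    by (meson UnI1 mem_tasks order_trans)
  also have "\<dots> \<le> job_completion Mp Rd v S sp j"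
    using \<open>i \<in> Mp j\<close> assms(2) by (intro task_completion_le_job_completion) auto
  finally show ?thesis .
qed

lemma weighted_job_completion_le_objective:
  assumes "feas S sp" "j < n"
  shows "w j * job_completion Mp Rd v S sp j \<le> obj S sp"
  unfolding objective_def
  using assms job_completion_nonneg[OF assms(1)] w_pos
  by (intro member_le_sum) (auto intro: mult_nonneg_nonneg less_imp_le)

lemma objective_nonneg: "feas S sp \<Longrightarrow> obj S sp \<ge> 0"
  using weighted_job_completion_le_objective[of S sp 0] n_pos w_pos[of 0]
    job_completion_nonneg[of S sp 0] by (smt (verit) mult_nonneg_nonneg)

definition "w_min = Min (w ` {..<n})"
definition "w_max = Max (w ` {..<n})"
definition "r_max = Max (r ` {..<n})"
definition "v_max = Max ((\<lambda>(i, j). v i j) ` \<T>)"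

lemma w_min_pos: "w_min > 0"
  unfolding w_min_def using n_pos w_pos by (subst Min_gr_iff) auto

lemma w_min_le: "j < n \<Longrightarrow> w_min \<le> w j"
  unfolding w_min_def by (intro Min_le) auto

lemma w_max_ge: "j < n \<Longrightarrow> w j \<le> w_max"
  unfolding w_max_def by (intro Max_ge) auto

lemma r_max_ge: "j < n \<Longrightarrow> r j \<le> r_max"
  unfolding r_max_def by (intro Max_ge) auto

lemma r_max_nonneg: "r_max \<ge> 0"
  using r_max_ge[of 0] r_nonneg[of 0] n_pos by auto

lemma v_max_ge: "(i, j) \<in> \<T> \<Longrightarrow> v i j \<le> v_max"
  unfolding v_max_def using finite_tasks by (intro Max_ge) force+

lemma v_max_pos: "v_max > 0"
  using positive_work v_max_ge by fastforce

lemma task_completion_le_objective: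
  assumes "feas S sp" "(i, j) \<in> \<T>"
  shows "w_min * task_completion v S sp i j \<le> obj S sp"
proof -
  have j: "j < n" "i \<in> Mp j \<union> Rd j"
    using assms(2) by (auto simp: mem_tasks)
  have "w_min * task_completion v S sp i j \<le> w j * job_completion Mp Rd v S sp j"
    using w_min_le[OF j(1)] w_min_pos task_completion_le_job_completion[OF j]
      start_nonneg[OF assms] start_le_completion[OF assms]
    by (intro mult_mono) auto
  also have "\<dots> \<le> obj S sp"
    using assms(1) j(1) by (rule weighted_job_completion_le_objective)
  finally show ?thesis .
qed

lemma speed_lower_bound:
  assumes "feas S sp" "(i, j) \<in> \<T>" "v i j > 0"
  shows "w_min * v_min n Mp Rd v \<le> obj S sp * sp i j"
proof -
  have sp: "sp i j > 0"
    using assms(1,2) by (rule speed_pos)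
  have "v i j / sp i j \<le> task_completion v S sp i j"
    using start_nonneg[OF assms(1,2)] by (simp add: task_completion_def)
  then have "w_min * (v i j / sp i j) \<le> obj S sp"
    using task_completion_le_objective[OF assms(1,2)] w_min_pos
    by (meson mult_left_mono less_imp_le order_trans)
  then have "w_min * v i j \<le> obj S sp * sp i j"
    using sp by (simp add: field_simps)
  then show ?thesis
    using v_min_le[OF assms(2,3)] w_min_pos by (smt (verit) mult_left_mono)
qed

text \<open>
  The reference schedule behind t_max: all tasks run at the common speed ref_speed, at which each
  takes time at most slot and energy at most E / |\<T>|; job j occupies the window from
  r_max + 2 j slot to r_max + (2 j + 2) slot, with its Map tasks in the first half and its Reduce
  tasks in the second.
\<close>

definition "slot = (real (card \<T>) * v_max powr \<beta> / E) powr (1 / (\<beta> - 1))"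
definition "ref_speed = v_max / slot"
definition "ref_start i j = r_max + (2 * real j + (if i \<in> Mp j then 0 else 1)) * slot"

lemma card_tasks_pos: "real (card \<T>) > 0"
  using finite_tasks positive_work by (auto simp: card_gt_0_iff)

lemma slot_pos: "slot > 0"
  unfolding slot_def using card_tasks_pos v_max_pos E_pos by simp

lemma ref_speed_pos: "ref_speed > 0"
  using v_max_pos slot_pos by (simp add: ref_speed_def)

lemma ref_speed_powr: "ref_speed powr (\<beta> - 1) = E / (real (card \<T>) * v_max)"
proof -
  have "slot powr (\<beta> - 1) = real (card \<T>) * v_max powr \<beta> / E"
    unfolding slot_def using card_tasks_pos v_max_pos E_pos beta_gt_1 by (simp add: powr_powr)
  moreover have "v_max powr \<beta> = v_max powr (\<beta> - 1) * v_max"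
    using v_max_pos powr_add[of v_max "\<beta> - 1" 1] by simp
  ultimately show ?thesis
    unfolding ref_speed_def using v_max_pos slot_pos card_tasks_pos E_pos
    by (simp add: powr_divide field_simps)
qed

lemma ref_duration_le: "(i, j) \<in> \<T> \<Longrightarrow> v i j / ref_speed \<le> slot"
  unfolding ref_speed_def using v_max_ge[of i j] slot_pos v_max_pos
  by (simp add: field_simps mult_right_mono)

lemma ref_completion_le:
  "(i, j) \<in> \<T> \<Longrightarrow> task_completion v ref_start (\<lambda>_ _. ref_speed) i j \<le> ref_start i j + slot"
  using ref_duration_le by (simp add: task_completion_def)

lemma ref_completion_le_window:
  "(i, j) \<in> \<T> \<Longrightarrow> task_completion v ref_start (\<lambda>_ _. ref_speed) i j \<le> r_max + (2 * real j + 2) * slot"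
  using ref_completion_le[of i j] slot_pos
  by (cases "i \<in> Mp j") (simp_all add: ref_start_def algebra_simps)

lemma ref_start_ge_window: "r_max + 2 * real j * slot \<le> ref_start i j"
  using slot_pos by (simp add: ref_start_def algebra_simps)

lemma ref_energy_le: "(\<Sum>(i, j) \<in> \<T>. v i j * ref_speed powr (\<beta> - 1)) \<le> E"
proof -
  have "(\<Sum>(i, j) \<in> \<T>. v i j * ref_speed powr (\<beta> - 1)) \<le> (\<Sum>(i, j) \<in> \<T>. E / real (card \<T>))"
  proof (rule sum_mono, clarify)
    fix i j assume "(i, j) \<in> \<T>"
    then have "v i j * E / (real (card \<T>) * v_max) \<le> v_max * E / (real (card \<T>) * v_max)"
      using v_max_ge E_pos card_tasks_pos v_max_pos
      by (intro divide_right_mono mult_right_mono) auto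
    then show "v i j * ref_speed powr (\<beta> - 1) \<le> E / real (card \<T>)"
      using v_max_pos by (simp add: ref_speed_powr)
  qed
  also have "\<dots> = E"
    using card_tasks_pos by simp
  finally show ?thesis .
qed

lemma feasible_reference: "feas ref_start (\<lambda>_ _. ref_speed)"
proof -
  let ?C = "task_completion v ref_start (\<lambda>_ _. ref_speed)"
  have release: "r j \<le> ref_start i j" if "(i, j) \<in> \<T>" for i j
    using that r_max_ge[of j] ref_start_ge_window[of j i] slot_pos
    by (simp add: mem_tasks) (smt (verit) of_nat_0_le_iff mult_nonneg_nonneg)
  have disjoint: "?C i j \<le> ref_start i j' \<or> ?C i j' \<le> ref_start i j"
    if t: "(i, j) \<in> \<T>" "(i, j') \<in> \<T>" and "j \<noteq> j'" for i j j'
  proof -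
    from \<open>j \<noteq> j'\<close> consider "real j + 1 \<le> real j'" | "real j' + 1 \<le> real j"
      by linarith
    then show ?thesis
      using ref_completion_le_window[OF t(1)] ref_completion_le_window[OF t(2)]
        ref_start_ge_window[of j i] ref_start_ge_window[of j' i] slot_pos
      by cases (smt (verit) mult_right_mono)+
  qed
  have precedence: "?C i' j \<le> ref_start i j" if "j < n" "i \<in> Rd j" "i' \<in> Mp j" for j i i'
  proof -
    have "i \<notin> Mp j"
      using that Mp_Rd_disjoint by auto
    with that show ?thesis
      using ref_completion_le[of i' j] by (simp add: mem_tasks ref_start_def algebra_simps)
  qed
  show ?thesis
    by (rule feasibleI[OF _ release disjoint precedence ref_energy_le]) (rule ref_speed_pos)
qed

lemma t_max_eq:
  "t_max n Mp Rd w r v \<beta> E = w_max / w_min * (real n * r_max + real n * (real n + 1) * slot)"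
  unfolding t_max_def Let_def slot_def w_min_def w_max_def r_max_def v_max_def ..

lemma t_max_pos: "t_max n Mp Rd w r v \<beta> E > 0"
proof -
  have "w_max > 0"
    using w_max_ge[of 0] w_pos[of 0] n_pos by auto
  moreover have "real n * r_max + real n * (real n + 1) * slot > 0"
    using n_pos r_max_nonneg slot_pos by (intro add_nonneg_pos) auto
  ultimately show ?thesis
    unfolding t_max_eq using w_min_pos by simp
qed

lemma objective_reference_le: "obj ref_start (\<lambda>_ _. ref_speed) \<le> w_min * t_max n Mp Rd w r v \<beta> E"
proof -
  have "obj ref_start (\<lambda>_ _. ref_speed) \<le> (\<Sum>j<n. w_max * (r_max + (2 * real j + 2) * slot))"
    unfolding objective_def
  proof (rule sum_mono)
    fix j assume j: "j \<in> {..<n}"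
    then have "job_completion Mp Rd v ref_start (\<lambda>_ _. ref_speed) j \<le> r_max + (2 * real j + 2) * slot"
      unfolding job_completion_def using finite_job_procs[of j] Mp_nonempty[of j]
      by (subst Max_le_iff) (auto intro!: ref_completion_le_window simp: mem_tasks)
    then show "w j * job_completion Mp Rd v ref_start (\<lambda>_ _. ref_speed) j
        \<le> w_max * (r_max + (2 * real j + 2) * slot)"
      using j w_max_ge[of j] w_pos[of j] job_completion_nonneg[OF feasible_reference, of j]
      by (intro mult_mono) auto
  qed
  also have "\<dots> = w_min * t_max n Mp Rd w r v \<beta> E"
    unfolding t_max_eq using w_min_pos by (simp add: sum_distrib_left[symmetric] sum_lessThan_affine)
  finally show ?thesis .
qed

lemma bdd_below_objectives: "bdd_below {obj S sp | S sp. feas S sp}"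
  using objective_nonneg by (intro bdd_belowI[of _ 0]) auto

lemma opt_le_objective: "feas S sp \<Longrightarrow> OPT \<le> obj S sp"
  unfolding opt_value_def by (intro cInf_lower[OF _ bdd_below_objectives]) auto

lemma opt_nonneg: "OPT \<ge> 0"
  unfolding opt_value_def using feasible_reference objective_nonneg by (intro cInf_greatest) auto

lemma opt_le_t_max: "OPT \<le> w_min * t_max n Mp Rd w r v \<beta> E"
  using opt_le_objective[OF feasible_reference] objective_reference_le by linarith

definition "unit_idle_speeds sp i j = (if v i j = 0 then 1 else sp i j)"

lemma task_completion_unit_idle_speeds:
  "task_completion v S (unit_idle_speeds sp) = task_completion v S sp"
  by (intro ext) (simp add: task_completion_def unit_idle_speeds_def)

lemma feasible_unit_idle_speeds:
  assumes "feas S sp"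
  shows "feas S (unit_idle_speeds sp)"
proof -
  have "(\<Sum>(i, j) \<in> \<T>. v i j * unit_idle_speeds sp i j powr (\<beta> - 1))
      = (\<Sum>(i, j) \<in> \<T>. v i j * sp i j powr (\<beta> - 1))"
    by (intro sum.cong) (auto simp: unit_idle_speeds_def)
  with assms show ?thesis
    unfolding feasible_def task_completion_unit_idle_speeds by (auto simp: unit_idle_speeds_def)
qed

lemma objective_unit_idle_speeds: "obj S (unit_idle_speeds sp) = obj S sp"
  unfolding objective_def job_completion_def task_completion_unit_idle_speeds ..

lemma near_optimal_schedule:
  assumes "e > 0"
  obtains S sp where "feas S sp" "obj S sp < OPT + e"
proof -
  have "{obj S sp | S sp. feas S sp} \<noteq> {}"
    using feasible_reference by auto
  moreover have "OPT < OPT + e"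
    using assms by simp
  ultimately show ?thesis
    using that cInf_less_iff[OF _ bdd_below_objectives] unfolding opt_value_def by blast
qed

context
  fixes Sq spq :: "nat \<Rightarrow> nat \<Rightarrow> nat \<Rightarrow> real" and S sp :: "nat \<Rightarrow> nat \<Rightarrow> real"
  assumes feasible_seq: "\<And>k. feas (Sq k) (spq k)"
    and start_lim: "\<And>i j. (i, j) \<in> \<T> \<Longrightarrow> (\<lambda>k. Sq k i j) \<longlonglongrightarrow> S i j"
    and speed_lim: "\<And>i j. (i, j) \<in> \<T> \<Longrightarrow> (\<lambda>k. spq k i j) \<longlonglongrightarrow> sp i j"
    and speed_lim_pos: "\<And>i j. (i, j) \<in> \<T> \<Longrightarrow> sp i j > 0"
begin

lemma tendsto_task_completion:
  assumes "(i, j) \<in> \<T>"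
  shows "(\<lambda>k. task_completion v (Sq k) (spq k) i j) \<longlonglongrightarrow> task_completion v S sp i j"
  unfolding task_completion_def
  using start_lim[OF assms] speed_lim[OF assms] speed_lim_pos[OF assms]
  by (intro tendsto_intros) auto

lemma feasible_limit: "feas S sp"
proof -
  let ?C = "task_completion v S sp"
  have release: "r j \<le> S i j" if "(i, j) \<in> \<T>" for i j
    using start_lim[OF that] start_ge_release[OF feasible_seq that] by (intro LIMSEQ_le_const) auto
  have disjoint: "?C i j \<le> S i j' \<or> ?C i j' \<le> S i j"
    if t: "(i, j) \<in> \<T>" "(i, j') \<in> \<T>" "j \<noteq> j'" for i j j'
  proof (rule LIMSEQ_le_disj[OF _ tendsto_task_completion[OF t(1)] start_lim[OF t(2)]
        tendsto_task_completion[OF t(2)] start_lim[OF t(1)]])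
    show "task_completion v (Sq k) (spq k) i j \<le> Sq k i j' \<or>
        task_completion v (Sq k) (spq k) i j' \<le> Sq k i j" for k
      using feasible_seq t by (rule feasible_disjointD)
  qed
  have precedence: "?C i' j \<le> S i j" if "j < n" "i \<in> Rd j" "i' \<in> Mp j" for j i i'
  proof (rule LIMSEQ_le)
    show "\<exists>N. \<forall>k\<ge>N. task_completion v (Sq k) (spq k) i' j \<le> Sq k i j"
      using feasible_precedenceD[OF feasible_seq that] by blast
  qed (use that tendsto_task_completion start_lim in \<open>auto simp: mem_tasks\<close>)
  have "(\<lambda>k. \<Sum>p \<in> \<T>. v (fst p) (snd p) * spq k (fst p) (snd p) powr (\<beta> - 1))
      \<longlonglongrightarrow> (\<Sum>p \<in> \<T>. v (fst p) (snd p) * sp (fst p) (snd p) powr (\<beta> - 1))"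
    using speed_lim by (intro tendsto_intros) (auto dest: speed_lim_pos)
  moreover have "(\<Sum>p \<in> \<T>. v (fst p) (snd p) * spq k (fst p) (snd p) powr (\<beta> - 1)) \<le> E" for k
    using feasible_energyD[OF feasible_seq[of k]] by (simp add: case_prod_beta)
  ultimately have "(\<Sum>p \<in> \<T>. v (fst p) (snd p) * sp (fst p) (snd p) powr (\<beta> - 1)) \<le> E"
    by (intro LIMSEQ_le_const2) auto
  then have energy: "(\<Sum>(i, j) \<in> \<T>. v i j * sp i j powr (\<beta> - 1)) \<le> E"
    by (simp add: case_prod_beta)
  show ?thesis
    using speed_lim_pos release disjoint precedence energy by (rule feasibleI)
qed

lemma tendsto_objective: "(\<lambda>k. obj (Sq k) (spq k)) \<longlonglongrightarrow> obj S sp"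
  unfolding objective_def job_completion_def
proof (intro tendsto_intros)
  fix j assume "j \<in> {..<n}"
  then show "(\<lambda>k. Max ((\<lambda>i. task_completion v (Sq k) (spq k) i j) ` (Mp j \<union> Rd j)))
      \<longlonglongrightarrow> Max ((\<lambda>i. task_completion v S sp i j) ` (Mp j \<union> Rd j))"
    using finite_job_procs[of j] Mp_nonempty[of j] tendsto_task_completion
    by (intro tendsto_Max_image) (auto simp: mem_tasks)
qed

end

lemma near_optimal_sequence:
  obtains Sq sq :: "nat \<Rightarrow> nat \<Rightarrow> nat \<Rightarrow> real"
  where "\<And>k. feas (Sq k) (sq k)" and "\<And>k. obj (Sq k) (sq k) < OPT + inverse (real (Suc k))"
    and "\<And>k i j. v i j = 0 \<Longrightarrow> sq k i j = 1"
proof -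
  have "\<exists>S sp. feas S sp \<and> obj S sp < OPT + inverse (real (Suc k))" for k
    by (rule near_optimal_schedule[of "inverse (real (Suc k))"]) auto
  then obtain Sq spq where feas_near: "\<And>k. feas (Sq k) (spq k)"
    and obj_near: "\<And>k. obj (Sq k) (spq k) < OPT + inverse (real (Suc k))"
    by metis
  show ?thesis
  proof
    show "feas (Sq k) (unit_idle_speeds (spq k))" for k
      using feas_near by (rule feasible_unit_idle_speeds)
    show "obj (Sq k) (unit_idle_speeds (spq k)) < OPT + inverse (real (Suc k))" for k
      using obj_near[of k] by (simp only: objective_unit_idle_speeds)
    show "unit_idle_speeds (spq k) i j = 1" if "v i j = 0" for k i j
      using that by (simp add: unit_idle_speeds_def)
  qed
qed

lemma near_optimal_sequence_bounded:
  assumes feas_q: "\<And>k. feas (Sq k) (sq k)" and obj_q: "\<And>k. obj (Sq k) (sq k) \<le> OPT + 1"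
    and idle: "\<And>k i j. v i j = 0 \<Longrightarrow> sq k i j = 1"
  obtains a B where "a > 0" and "\<And>k i j. (i, j) \<in> \<T> \<Longrightarrow> \<bar>Sq k i j\<bar> \<le> B"
    and "\<And>k i j. (i, j) \<in> \<T> \<Longrightarrow> a \<le> sq k i j \<and> sq k i j \<le> B"
proof
  define B where "B = max ((OPT + 1) / w_min) (max 1 (s_U n Mp Rd v \<beta> E))"
  define a where "a = min 1 (w_min * v_min n Mp Rd v / (OPT + 1))"
  show "a > 0"
    unfolding a_def using w_min_pos v_min_pos opt_nonneg by simp
  show "\<bar>Sq k i j\<bar> \<le> B" if t: "(i, j) \<in> \<T>" for k i j
  proof -
    have "w_min * Sq k i j \<le> OPT + 1"
      using start_le_completion[OF feas_q t] task_completion_le_objective[OF feas_q t] obj_q[of k]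
        w_min_pos by (smt (verit) mult_left_mono)
    then have "Sq k i j \<le> (OPT + 1) / w_min"
      using w_min_pos by (simp add: field_simps)
    then show ?thesis
      unfolding B_def using start_nonneg[OF feas_q t] by simp
  qed
  show "a \<le> sq k i j \<and> sq k i j \<le> B" if t: "(i, j) \<in> \<T>" for k i j
  proof (cases "v i j = 0")
    case True
    then show ?thesis
      by (simp add: idle a_def B_def)
  next
    case False
    then have "v i j > 0"
      using v_nonneg[OF t] by simp
    then have "w_min * v_min n Mp Rd v \<le> (OPT + 1) * sq k i j"
      using speed_lower_bound[OF feas_q t] obj_q[of k] speed_pos[OF feas_q t]
      by (smt (verit) mult_right_mono)
    then have "w_min * v_min n Mp Rd v / (OPT + 1) \<le> sq k i j"
      using opt_nonneg by (simp add: field_simps)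
    then show ?thesis
      using speed_le_s_U[OF feas_q t \<open>v i j > 0\<close>]
      by (auto simp: a_def B_def min_le_iff_disj le_max_iff_disj)
  qed
qed

lemma optimal_schedule_exists:
  obtains S sp where "feas S sp" "obj S sp \<le> OPT"
proof -
  obtain Sq sq where feas_q: "\<And>k. feas (Sq k) (sq k)"
    and obj_q: "\<And>k. obj (Sq k) (sq k) < OPT + inverse (real (Suc k))"
    and idle: "\<And>k i j. v i j = 0 \<Longrightarrow> sq k i j = 1"
    using near_optimal_sequence by blast
  have obj_le: "obj (Sq k) (sq k) \<le> OPT + 1" for k
    using obj_q[of k] inverse_le_1_iff[of "real (Suc k)"] by linarith
  obtain a B where a_pos: "a > 0" and start_bound: "\<And>k i j. (i, j) \<in> \<T> \<Longrightarrow> \<bar>Sq k i j\<bar> \<le> B"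
    and speed_bounds: "\<And>k i j. (i, j) \<in> \<T> \<Longrightarrow> a \<le> sq k i j \<and> sq k i j \<le> B"
    using near_optimal_sequence_bounded[of Sq sq, OF feas_q obj_le idle] by blast
  \<comment> \<open>Start times and speeds as one finite family, so one subsequence makes all of them converge.\<close>
  define f where "f k = (\<lambda>((i, j), b). if b then Sq k i j else sq k i j)" for k
  have "\<bar>f k ((i, j), b)\<bar> \<le> B" if "(i, j) \<in> \<T>" for k i j b
    using start_bound[OF that] speed_bounds[OF that, of k] a_pos by (cases b) (auto simp: f_def)
  then obtain \<sigma> where \<sigma>: "strict_mono \<sigma>" "\<forall>x \<in> \<T> \<times> UNIV. convergent (\<lambda>k. f (\<sigma> k) x)"
    using bounded_family_convergent_subseq[of "\<T> \<times> UNIV" f B] finite_tasks by auto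
  define S where "S i j = lim (\<lambda>k. Sq (\<sigma> k) i j)" for i j
  define sp where "sp i j = lim (\<lambda>k. sq (\<sigma> k) i j)" for i j
  have "convergent (\<lambda>k. f (\<sigma> k) ((i, j), b))" if "(i, j) \<in> \<T>" for i j b
    using \<sigma>(2) that by blast
  from this[of _ _ True] this[of _ _ False]
  have start_lim: "(\<lambda>k. Sq (\<sigma> k) i j) \<longlonglongrightarrow> S i j"
    and speed_lim: "(\<lambda>k. sq (\<sigma> k) i j) \<longlonglongrightarrow> sp i j" if "(i, j) \<in> \<T>" for i j
    using that by (simp_all add: f_def S_def sp_def convergent_LIMSEQ_iff)
  have speed_lim_pos: "sp i j > 0" if "(i, j) \<in> \<T>" for i j
    using speed_lim[OF that] speed_bounds[OF that] a_pos by (smt (verit) LIMSEQ_le_const)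
  have "feas S sp"
    using feas_q start_lim speed_lim speed_lim_pos by (rule feasible_limit)
  moreover have "obj S sp \<le> OPT + 0"
  proof (rule LIMSEQ_le)
    show "(\<lambda>k. obj (Sq (\<sigma> k)) (sq (\<sigma> k))) \<longlonglongrightarrow> obj S sp"
      using feas_q start_lim speed_lim speed_lim_pos by (rule tendsto_objective)
    show "(\<lambda>k. OPT + inverse (real (Suc k))) \<longlonglongrightarrow> OPT + 0"
      by (intro tendsto_intros LIMSEQ_inverse_real_of_nat)
    have "inverse (real (Suc (\<sigma> k))) \<le> inverse (real (Suc k))" for k
      using seq_suble[OF \<sigma>(1), of k] by (simp add: field_simps)
    then show "\<exists>N. \<forall>k\<ge>N. obj (Sq (\<sigma> k)) (sq (\<sigma> k)) \<le> OPT + inverse (real (Suc k))"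
      using obj_q by (smt (verit))
  qed
  ultimately show ?thesis
    using that by simp
qed

context
  fixes \<epsilon> :: real and S sp sp' :: "nat \<Rightarrow> nat \<Rightarrow> real"
  assumes eps_nonneg: "\<epsilon> \<ge> 0" and feasible_S: "feas S sp"
    and new_speed_pos: "\<And>i j. (i, j) \<in> \<T> \<Longrightarrow> sp' i j > 0"
    and new_speed_bounds:
      "\<And>i j. (i, j) \<in> \<T> \<Longrightarrow> v i j > 0 \<Longrightarrow> sp' i j \<le> sp i j \<and> sp i j \<le> (1 + \<epsilon>) * sp' i j"
begin

lemma stretched_task_completion_le:
  assumes t: "(i, j) \<in> \<T>"
  shows "task_completion v (\<lambda>i j. (1 + \<epsilon>) * S i j) sp' i j \<le> (1 + \<epsilon>) * task_completion v S sp i j"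
proof -
  have "v i j / sp' i j \<le> (1 + \<epsilon>) * (v i j / sp i j)"
  proof (cases "v i j > 0")
    case True
    then have "v i j * sp i j \<le> v i j * ((1 + \<epsilon>) * sp' i j)"
      using new_speed_bounds[OF t] by (intro mult_left_mono) auto
    then show ?thesis
      using speed_pos[OF feasible_S t] new_speed_pos[OF t] by (simp add: field_simps)
  next
    case False
    then show ?thesis
      using v_nonneg[OF t] by simp
  qed
  then show ?thesis
    by (simp add: task_completion_def algebra_simps)
qed

lemma feasible_stretched: "feas (\<lambda>i j. (1 + \<epsilon>) * S i j) sp'"
proof -
  let ?S' = "\<lambda>i j. (1 + \<epsilon>) * S i j"
  let ?C = "task_completion v S sp" and ?C' = "task_completion v ?S' sp'"
  have scale: "?C' i j \<le> ?S' i' j'" if "(i, j) \<in> \<T>" "?C i j \<le> S i' j'" for i j i' j'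
    using stretched_task_completion_le[OF that(1)] mult_left_mono[OF that(2), of "1 + \<epsilon>"] eps_nonneg
    by linarith
  have release: "r j \<le> ?S' i j" if "(i, j) \<in> \<T>" for i j
  proof -
    have "S i j \<le> ?S' i j"
      using start_nonneg[OF feasible_S that] eps_nonneg by (simp add: algebra_simps)
    then show ?thesis
      using start_ge_release[OF feasible_S that] by linarith
  qed
  have disjoint: "?C' i j \<le> ?S' i j' \<or> ?C' i j' \<le> ?S' i j"
    if "(i, j) \<in> \<T>" "(i, j') \<in> \<T>" "j \<noteq> j'" for i j j'
    using feasible_disjointD[OF feasible_S that] scale[OF that(1)] scale[OF that(2)] by blast
  have precedence: "?C' i' j \<le> ?S' i j" if "j < n" "i \<in> Rd j" "i' \<in> Mp j" for j i i'
    using feasible_precedenceD[OF feasible_S that] scale[of i' j i j] that by (simp add: mem_tasks)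
  have "(\<Sum>(i, j) \<in> \<T>. v i j * sp' i j powr (\<beta> - 1)) \<le> (\<Sum>(i, j) \<in> \<T>. v i j * sp i j powr (\<beta> - 1))"
  proof (rule sum_mono, clarify)
    fix i j assume t: "(i, j) \<in> \<T>"
    show "v i j * sp' i j powr (\<beta> - 1) \<le> v i j * sp i j powr (\<beta> - 1)"
    proof (cases "v i j > 0")
      case True
      then show ?thesis
        using new_speed_bounds[OF t] new_speed_pos[OF t] beta_gt_1
        by (intro mult_left_mono powr_mono2) auto
    next
      case False
      then show ?thesis
        using v_nonneg[OF t] by simp
    qed
  qed
  also have "\<dots> \<le> E"
    using feasible_S by (rule feasible_energyD)
  finally have energy: "(\<Sum>(i, j) \<in> \<T>. v i j * sp' i j powr (\<beta> - 1)) \<le> E" .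
  show ?thesis
    using new_speed_pos release disjoint precedence energy by (rule feasibleI)
qed

lemma objective_stretched_le: "obj (\<lambda>i j. (1 + \<epsilon>) * S i j) sp' \<le> (1 + \<epsilon>) * obj S sp"
proof -
  have "job_completion Mp Rd v (\<lambda>i j. (1 + \<epsilon>) * S i j) sp' j \<le> (1 + \<epsilon>) * job_completion Mp Rd v S sp j"
    if j: "j < n" for j
    unfolding job_completion_def
  proof (rule Max.boundedI)
    fix y assume "y \<in> (\<lambda>i. task_completion v (\<lambda>i j. (1 + \<epsilon>) * S i j) sp' i j) ` (Mp j \<union> Rd j)"
    then obtain i where i: "i \<in> Mp j \<union> Rd j" and y: "y = task_completion v (\<lambda>i j. (1 + \<epsilon>) * S i j) sp' i j"
      by auto
    have "y \<le> (1 + \<epsilon>) * task_completion v S sp i j"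
      unfolding y using i j by (intro stretched_task_completion_le) (simp add: mem_tasks)
    also have "\<dots> \<le> (1 + \<epsilon>) * job_completion Mp Rd v S sp j"
      using task_completion_le_job_completion[OF j i] eps_nonneg by (intro mult_left_mono) auto
    finally show "y \<le> (1 + \<epsilon>) * Max ((\<lambda>i. task_completion v S sp i j) ` (Mp j \<union> Rd j))"
      by (simp add: job_completion_def)
  qed (use j finite_job_procs Mp_nonempty in auto)
  then have "obj (\<lambda>i j. (1 + \<epsilon>) * S i j) sp' \<le> (\<Sum>j<n. w j * ((1 + \<epsilon>) * job_completion Mp Rd v S sp j))"
    unfolding objective_def using w_pos by (intro sum_mono mult_left_mono) (auto intro: less_imp_le)
  also have "\<dots> = (1 + \<epsilon>) * obj S sp"
    by (simp add: objective_def sum_distrib_left algebra_simps)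
  finally show ?thesis .
qed

end

lemma s_L_pos: "s_L n Mp Rd w r v \<beta> E > 0"
  unfolding s_L_def using v_min_pos t_max_pos by simp

lemma optimal_speed_bounds:
  assumes "feas S sp" "obj S sp \<le> OPT" "(i, j) \<in> \<T>" "v i j > 0"
  shows "s_L n Mp Rd w r v \<beta> E \<le> sp i j" and "sp i j \<le> s_U n Mp Rd v \<beta> E"
proof -
  have "w_min * v_min n Mp Rd v \<le> w_min * t_max n Mp Rd w r v \<beta> E * sp i j"
    using speed_lower_bound[OF assms(1,3,4)] assms(2) opt_le_t_max speed_pos[OF assms(1,3)]
    by (smt (verit) mult_right_mono)
  then show "s_L n Mp Rd w r v \<beta> E \<le> sp i j"
    unfolding s_L_def using w_min_pos t_max_pos by (simp add: field_simps)
  show "sp i j \<le> s_U n Mp Rd v \<beta> E"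
    using assms(1,3,4) by (rule speed_le_s_U)
qed

lemma speed_set_round_down:
  assumes "\<epsilon> > 0" "s_L n Mp Rd w r v \<beta> E \<le> s" "s \<le> s_U n Mp Rd v \<beta> E"
  shows "\<exists>x \<in> speed_set \<epsilon> n Mp Rd w r v \<beta> E. 0 < x \<and> x \<le> s \<and> s \<le> (1 + \<epsilon>) * x"
proof -
  obtain l :: nat where "int l \<le> k_param \<epsilon> n Mp Rd w r v \<beta> E"
    and "s_L n Mp Rd w r v \<beta> E * (1 + \<epsilon>) ^ l \<le> s"
    and "s \<le> (1 + \<epsilon>) * (s_L n Mp Rd w r v \<beta> E * (1 + \<epsilon>) ^ l)"
    using geometric_grid_round_down[OF s_L_pos assms(2,3,1)] unfolding k_param_def by blast
  moreover have "0 < s_L n Mp Rd w r v \<beta> E * (1 + \<epsilon>) ^ l"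
    using s_L_pos assms(1) by simp
  ultimately show ?thesis
    unfolding speed_set_def by blast
qed

lemma rounded_optimal_schedule:
  assumes "\<epsilon> > 0"
  shows "\<exists>S sp. feas S sp \<and> (\<forall>(i, j) \<in> \<T>. sp i j \<in> speed_set \<epsilon> n Mp Rd w r v \<beta> E) \<and>
           obj S sp \<le> (1 + \<epsilon>) * OPT"
proof -
  let ?V = "speed_set \<epsilon> n Mp Rd w r v \<beta> E"
  let ?sL = "s_L n Mp Rd w r v \<beta> E" and ?sU = "s_U n Mp Rd v \<beta> E"
  obtain S sp where opt: "feas S sp" "obj S sp \<le> OPT"
    by (rule optimal_schedule_exists)
  obtain i0 j0 where "(i0, j0) \<in> \<T>" "v i0 j0 > 0"
    using positive_work by auto
  then have "?sL \<le> ?sU"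
    using optimal_speed_bounds[OF opt] by force
  have "\<forall>s. \<exists>x. ?sL \<le> s \<and> s \<le> ?sU \<longrightarrow> x \<in> ?V \<and> 0 < x \<and> x \<le> s \<and> s \<le> (1 + \<epsilon>) * x"
    using speed_set_round_down[OF assms] by blast
  then obtain \<rho> where \<rho>: "\<And>s. ?sL \<le> s \<Longrightarrow> s \<le> ?sU \<Longrightarrow>
      \<rho> s \<in> ?V \<and> 0 < \<rho> s \<and> \<rho> s \<le> s \<and> s \<le> (1 + \<epsilon>) * \<rho> s"
    by metis
  \<comment> \<open>The speed of a task without work is irrelevant, but it must still lie in the grid.\<close>
  define sp' where "sp' i j = \<rho> (if v i j > 0 then sp i j else ?sL)" for i j
  have sp': "sp' i j \<in> ?V" "0 < sp' i j"
    "v i j > 0 \<Longrightarrow> sp' i j \<le> sp i j \<and> sp i j \<le> (1 + \<epsilon>) * sp' i j"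
    if "(i, j) \<in> \<T>" for i j
    using \<rho> optimal_speed_bounds[OF opt that] \<open>?sL \<le> ?sU\<close> by (simp_all add: sp'_def)
  have eps_nonneg: "0 \<le> \<epsilon>"
    using assms by simp
  have "obj (\<lambda>i j. (1 + \<epsilon>) * S i j) sp' \<le> (1 + \<epsilon>) * obj S sp"
    using eps_nonneg opt(1) sp'(2,3) by (rule objective_stretched_le)
  also have "\<dots> \<le> (1 + \<epsilon>) * OPT"
    using opt(2) eps_nonneg by (intro mult_left_mono) auto
  finally show ?thesis
    using feasible_stretched[OF eps_nonneg opt(1) sp'(2,3)] sp'(1) by blast
qed

end

theorem lemma1:
  fixes n m :: nat and Mp Rd :: "nat \<Rightarrow> nat set" and w r :: "nat \<Rightarrow> real"
    and v :: "nat \<Rightarrow> nat \<Rightarrow> real" and \<beta> E \<epsilon> :: real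
  assumes inst: "mr_instance n m Mp Rd w r v \<beta> E"
    and pos_work: "\<exists>(i, j) \<in> tasks n Mp Rd. v i j > 0"
    and eps: "\<epsilon> > 0"
  shows "\<exists>S sp. feasible n Mp Rd r v \<beta> E S sp \<and>
           (\<forall>(i, j) \<in> tasks n Mp Rd. sp i j \<in> speed_set \<epsilon> n Mp Rd w r v \<beta> E) \<and>
           objective n Mp Rd w v S sp \<le> (1 + \<epsilon>) * opt_value n Mp Rd w r v \<beta> E"
proof -
  interpret mr_problem n m Mp Rd w r v \<beta> E
    using inst pos_work by unfold_locales
  show ?thesis
    using eps by (rule rounded_optimal_schedule)
qed

end
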